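(* Let $Q$ be a $3\times 3$ array containing each of the symbols $0,1,\dots,8$ exactly once, such that each row and each column of $Q$ has sum $12$. Then either the entry sets of the three rows of $Q$ are $\{0,4,8\}$, $\{1,5,6\}$, $\{2,3,7\}$ (in some order) and the entry sets of the three columns are $\{0,5,7\}$, $\{2,4,6\}$, $\{1,3,8\}$ (in some order), or the same holds with the roles of rows and columns interchanged. *)

theory Defs
  imports Main
begin

text \<open>A 3x3 array is modelled as Q :: nat => nat => nat, with entry Q i j at row i, column j,
for i, j in {0..<3}. Entries outside this range are irrelevant.\<close>

definition row_set :: "(nat \<Rightarrow> nat \<Rightarrow> nat) \<Rightarrow> nat \<Rightarrow> nat set" where
  "row_set Q i = (\<lambda>j. Q i j) ` {0..<3}"

definition col_set :: "(nat \<Rightarrow> nat \<Rightarrow> nat) \<Rightarrow> nat \<Rightarrow> nat set" where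
  "col_set Q j = (\<lambda>i. Q i j) ` {0..<3}"

end

theory Submission
  imports Defs
begin

text \<open>Each line of the array is a 3-subset of \<open>{0..8}\<close> with sum 12; there are only eight such
  triples, and only two ways to partition \<open>{0..8}\<close> into three of them. So the rows form one of
  these two partitions and so do the columns. They cannot form the same one, because a row and a
  column share exactly one cell and hence are never equal as sets.\<close>

definition sum_12_triples :: "nat set set" where
  "sum_12_triples = {{0,4,8}, {0,5,7}, {1,3,8}, {1,4,7}, {1,5,6}, {2,3,7}, {2,4,6}, {3,4,5}}"

lemma le_8_cases:
  fixes x :: nat
  assumes "x \<le> 8"
  obtains "x = 0" | "x = 1" | "x = 2" | "x = 3" | "x = 4" | "x = 5" | "x = 6" | "x = 7" | "x = 8"
  using assms by (auto simp: le_Suc_eq numeral_eq_Suc)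

lemma triple_sum_12_in_sum_12_triples:
  fixes T :: "nat set"
  assumes "T \<subseteq> {0..8}" and "card T = 3" and "\<Sum>T = 12"
  shows "T \<in> sum_12_triples"
proof -
  obtain x y z where T: "T = {x, y, z}" and distinct: "x \<noteq> y" "y \<noteq> z" "x \<noteq> z"
    using assms(2) by (auto simp: card_3_iff)
  \<comment> \<open>The truncated difference pins down \<open>z\<close> for the simplifier; the sum rules out overflow.\<close>
  then have "x + y + z = 12" "z = 12 - x - y" "x \<le> 8" "y \<le> 8" "z \<le> 8"
    using assms(1,3) by auto
  then show ?thesis
    unfolding T sum_12_triples_def using distinct
    by (cases rule: le_8_cases[OF \<open>x \<le> 8\<close>]; cases rule: le_8_cases[OF \<open>y \<le> 8\<close>])
       (simp_all add: insert_commute)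
qed

lemma partition_into_sum_12_triples:
  assumes "A \<in> sum_12_triples" "B \<in> sum_12_triples" "C \<in> sum_12_triples"
    and cover: "{0..8} \<subseteq> A \<union> B \<union> C"
  shows "{A, B, C} = {{0,4,8}, {1,5,6}, {2,3,7}} \<or> {A, B, C} = {{0,5,7}, {2,4,6}, {1,3,8}}"
proof -
  have "\<forall>x\<in>{0,1,2,3,4,5,6,7,8}. x \<in> A \<or> x \<in> B \<or> x \<in> C"
    using cover by (simp add: subset_iff)
  then show ?thesis
    using assms(1-3) unfolding sum_12_triples_def
    by (simp only: ball_simps insert_iff empty_iff simp_thms) (elim disjE; simp add: insert_commute)
qed

lemma col_set_eq_row_set_transpose: "col_set Q = row_set (\<lambda>i j. Q j i)"
  by (simp add: fun_eq_iff row_set_def col_set_def)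

lemma bij_betw_transpose:
  assumes "bij_betw (\<lambda>(i, j). Q i j) (A \<times> B) S"
  shows "bij_betw (\<lambda>(i, j). Q j i) (B \<times> A) S"
proof -
  have "bij_betw prod.swap (B \<times> A) (A \<times> B)"
    by (auto simp: bij_betw_def inj_on_def)
  from bij_betw_trans[OF this assms] show ?thesis
    by (simp add: comp_def case_prod_unfold)
qed

lemma atLeast0LessThan_3: "{0..<3::nat} = {0, 1, 2}"
  by auto

lemma row_sets_partition:
  assumes bij: "bij_betw (\<lambda>(i, j). Q i j) ({0..<3} \<times> {0..<3}) {0..8}"
    and rows: "\<And>i. i < 3 \<Longrightarrow> (\<Sum>j<3. Q i j) = 12"
  shows "row_set Q ` {0..<3} = {{0,4,8}, {1,5,6}, {2,3,7}}
       \<or> row_set Q ` {0..<3} = {{0,5,7}, {2,4,6}, {1,3,8}}"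
proof -
  have onto: "(\<lambda>(i, j). Q i j) ` ({0..<3} \<times> {0..<3}) = {0..8}"
    using bij by (rule bij_betw_imp_surj_on)
  have row_triple: "row_set Q i \<in> sum_12_triples" if "i < 3" for i
  proof -
    have inj: "inj_on (Q i) {0..<3}"
      using bij_betw_imp_inj_on[OF bij] that by (auto simp: inj_on_def)
    show ?thesis
    proof (rule triple_sum_12_in_sum_12_triples)
      show "row_set Q i \<subseteq> {0..8}"
        using bij_betw_apply[OF bij] that by (auto simp: row_set_def)
      show "card (row_set Q i) = 3"
        using card_image[OF inj] by (simp add: row_set_def)
      show "\<Sum>(row_set Q i) = 12"
        using sum.reindex[OF inj, of id] rows[OF that] by (simp add: row_set_def atLeast0LessThan)
    qed
  qed
  have "{0..8} \<subseteq> row_set Q 0 \<union> row_set Q 1 \<union> row_set Q 2"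
    using onto by (force simp: row_set_def atLeast0LessThan_3)
  moreover have "row_set Q ` {0..<3} = {row_set Q 0, row_set Q 1, row_set Q 2}"
    by (simp add: atLeast0LessThan_3)
  ultimately show ?thesis
    using partition_into_sum_12_triples row_triple by simp
qed

lemma row_set_neq_col_set:
  assumes inj: "inj_on (\<lambda>(i, j). Q i j) ({0..<3} \<times> {0..<3})" and "i < 3" "j < 3"
  shows "row_set Q i \<noteq> col_set Q j"
proof
  define j' where "j' = (if j = 0 then 1 else 0 :: nat)"
  assume "row_set Q i = col_set Q j"
  moreover have "Q i j' \<in> row_set Q i"
    by (simp add: row_set_def j'_def)
  ultimately obtain k where "k < 3" "Q i j' = Q k j"
    by (auto simp: col_set_def)
  then have "j' = j"
    using inj_onD[OF inj, of "(i, j')" "(k, j)"] \<open>i < 3\<close> \<open>j < 3\<close> by (simp add: j'_def)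
  then show False
    by (simp add: j'_def split: if_splits)
qed

theorem lemma3p1:
  fixes Q :: "nat \<Rightarrow> nat \<Rightarrow> nat"
  assumes bij: "bij_betw (\<lambda>(i, j). Q i j) ({0..<3} \<times> {0..<3}) {0..8}"
    and rows: "\<And>i. i < 3 \<Longrightarrow> (\<Sum>j<3. Q i j) = 12"
    and cols: "\<And>j. j < 3 \<Longrightarrow> (\<Sum>i<3. Q i j) = 12"
  shows "(row_set Q ` {0..<3} = {{0,4,8}, {1,5,6}, {2,3,7}} \<and>
          col_set Q ` {0..<3} = {{0,5,7}, {2,4,6}, {1,3,8}})
       \<or> (col_set Q ` {0..<3} = {{0,4,8}, {1,5,6}, {2,3,7}} \<and>
          row_set Q ` {0..<3} = {{0,5,7}, {2,4,6}, {1,3,8}})"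
proof -
  have row_partition: "row_set Q ` {0..<3} = {{0,4,8}, {1,5,6}, {2,3,7}}
      \<or> row_set Q ` {0..<3} = {{0,5,7}, {2,4,6}, {1,3,8}}"
    using bij rows by (rule row_sets_partition)
  have col_partition: "col_set Q ` {0..<3} = {{0,4,8}, {1,5,6}, {2,3,7}}
      \<or> col_set Q ` {0..<3} = {{0,5,7}, {2,4,6}, {1,3,8}}"
    unfolding col_set_eq_row_set_transpose
    using bij_betw_transpose[OF bij] cols by (rule row_sets_partition)
  have "col_set Q 0 \<notin> row_set Q ` {0..<3}"
    using row_set_neq_col_set[OF bij_betw_imp_inj_on[OF bij], of _ 0] by force
  then have "row_set Q ` {0..<3} \<noteq> col_set Q ` {0..<3}"
    by force
  with row_partition col_partition show ?thesis
    by (elim disjE) (simp_all only: simp_thms)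
qed

end
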